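(* Let $r \geq 3$ be an integer. There is a constant $C = C(r)$ such that every $K_r$-free graph $G$ on $n$ vertices, with $n$ sufficiently large, satisfies $\chi(G) \leq C \left(\frac{n}{\log n}\right)^{(r-2)/(r-1)}$.
   Context: $K_r$-free means containing no (not necessarily induced) copy of $K_r$; $\log$ is the natural logarithm. *)

theory Defs
  imports Complex_Main
begin

definition simple_graph :: "nat set \<Rightarrow> (nat \<Rightarrow> nat \<Rightarrow> bool) \<Rightarrow> bool" where
  "simple_graph V E \<longleftrightarrow> finite V \<and> (\<forall>u v. E u v \<longrightarrow> u \<in> V \<and> v \<in> V)
     \<and> (\<forall>u v. E u v \<longrightarrow> E v u) \<and> (\<forall>v. \<not> E v v)"

definition has_clique :: "nat set \<Rightarrow> (nat \<Rightarrow> nat \<Rightarrow> bool) \<Rightarrow> nat \<Rightarrow> bool" where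
  "has_clique V E r \<longleftrightarrow> (\<exists>S. S \<subseteq> V \<and> card S = r \<and> (\<forall>u\<in>S. \<forall>v\<in>S. u \<noteq> v \<longrightarrow> E u v))"

definition Kr_free :: "nat set \<Rightarrow> (nat \<Rightarrow> nat \<Rightarrow> bool) \<Rightarrow> nat \<Rightarrow> bool" where
  "Kr_free V E r \<longleftrightarrow> \<not> has_clique V E r"

definition colorable :: "nat set \<Rightarrow> (nat \<Rightarrow> nat \<Rightarrow> bool) \<Rightarrow> nat \<Rightarrow> bool" where
  "colorable V E k \<longleftrightarrow> (\<exists>c :: nat \<Rightarrow> nat. (\<forall>v\<in>V. c v < k) \<and> (\<forall>u\<in>V. \<forall>v\<in>V. E u v \<longrightarrow> c u \<noteq> c v))"

definition chromatic_number :: "nat set \<Rightarrow> (nat \<Rightarrow> nat \<Rightarrow> bool) \<Rightarrow> nat" where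
  "chromatic_number V E = (LEAST k. colorable V E k)"

end

theory Submission
  imports Defs "HOL-Analysis.Derivative"
begin

text \<open>Shearer's greedy argument (put a vertex into the independent set, delete its closed
  neighbourhood, and choose the vertex so that a convex potential of the average degree does not
  drop) shows that a graph with maximum degree D in which adjacent vertices have at most a common
  neighbours has an independent set of size of order n ln(D/a) / D. In a K_r-free graph
  neighbourhoods are K_(r-1)-free and common neighbourhoods of adjacent vertices are K_(r-2)-free,
  so induction on r gives R(r, t) \<le> C t^(r-1) / (ln t)^(r-2). Inverting this bound, every K_r-free
  graph on m vertices has an independent set of size c m^(1/(r-1)) (ln m)^((r-2)/(r-1)).
  Colouring greedily by removing such independent sets one at a time and summing the cost per
  removed vertex over the whole graph gives \<chi>(G) = O((n / ln n)^((r-2)/(r-1))).\<close>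

section \<open>Shearer's function\<close>

definition ln_div_self_deriv :: "real \<Rightarrow> real" where
  "ln_div_self_deriv y = (1 - ln y) / y^2"

lemma has_real_derivative_ln_div_self:
  "y > 0 \<Longrightarrow> ((\<lambda>y. ln y / y) has_real_derivative ln_div_self_deriv y) (at y)"
  unfolding ln_div_self_deriv_def
  by (rule derivative_eq_intros refl | simp)+ (simp add: field_simps power2_eq_square)

lemma has_real_derivative_ln_div_self_deriv:
  "y > 0 \<Longrightarrow> (ln_div_self_deriv has_real_derivative (2 * ln y - 3) / y^3) (at y)"
  unfolding ln_div_self_deriv_def
  by (rule derivative_eq_intros refl | simp)+ (simp add: field_simps eval_nat_numeral)

lemma ln_div_self_deriv_mono:
  assumes "exp (3/2) \<le> y" "y \<le> z" shows "ln_div_self_deriv y \<le> ln_div_self_deriv z"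
proof (rule DERIV_nonneg_imp_nondecreasing[OF assms(2)])
  fix x assume x: "y \<le> x" "x \<le> z"
  have e: "exp (3/2) \<le> x" using x assms(1) by linarith
  hence "x > 0" using exp_gt_zero[of "3/2::real"] by linarith
  have "ln (exp (3/2)) \<le> ln x" using e \<open>x > 0\<close> by (subst ln_le_cancel_iff) auto
  hence "(2 * ln x - 3) / x^3 \<ge> 0" using \<open>x > 0\<close> by simp
  thus "\<exists>d. DERIV ln_div_self_deriv x :> d \<and> d \<ge> 0"
    using has_real_derivative_ln_div_self_deriv[OF \<open>x > 0\<close>] by blast
qed

lemma convex_on_ln_div_self: "convex_on {exp (3/2)..} (\<lambda>y. ln y / y)"
proof (rule convex_on_realI[where f' = ln_div_self_deriv])
  fix x :: real assume "x \<in> {exp (3/2)..}"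
  hence "exp (3/2) \<le> x" by simp
  hence "x > 0" using exp_gt_zero[of "3/2::real"] by linarith
  thus "((\<lambda>y. ln y / y) has_real_derivative ln_div_self_deriv x) (at x)"
    by (rule has_real_derivative_ln_div_self)
qed (auto intro: ln_div_self_deriv_mono)

lemma ln_div_self_above_tangent:
  assumes "exp 2 \<le> y0" "exp 2 \<le> y1"
  shows "ln y0 / y0 + ln_div_self_deriv y0 * (y1 - y0) \<le> ln y1 / y1"
proof -
  have e: "exp (3/2) < (exp 2 :: real)" by (subst exp_less_cancel_iff) simp
  have "y0 > 0" using assms(1) exp_gt_zero[of "2::real"] by linarith
  have "ln_div_self_deriv y0 * (y1 - y0) \<le> ln y1 / y1 - ln y0 / y0"
  proof (rule convex_on_imp_above_tangent[OF convex_on_ln_div_self])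
    have "exp (3/2) < y0" using assms(1) e by linarith
    thus "y0 \<in> interior {exp (3/2)..}" by simp
    have "exp (3/2) \<le> y1" using assms(2) e by linarith
    thus "y1 \<in> {exp (3/2)..}" by simp
    show "((\<lambda>y. ln y / y) has_real_derivative ln_div_self_deriv y0) (at y0 within {exp (3/2)..})"
      using has_real_derivative_ln_div_self[OF \<open>y0 > 0\<close>] by (rule has_field_derivative_at_within)
  qed simp
  thus ?thesis by linarith
qed

lemma exp2_le_9: "exp 2 \<le> (9::real)"
proof -
  have "exp (2::real) = exp 1 * exp 1" by (simp flip: exp_add)
  also have "\<dots> \<le> 3 * 3" using exp_le by (intro mult_mono) auto
  finally show ?thesis by simp
qed

lemma two_le_ln: "exp 2 \<le> y \<Longrightarrow> 2 \<le> ln (y::real)"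
  using ln_le_cancel_iff[of "exp 2" y] exp_gt_zero[of 2] by (simp add: less_le_trans)

text \<open>For codegrees at most a, Shearer's argument needs a function g of the average degree d that is
  convex and satisfies (d + 1) g(d) \<le> 1 + (b d - d^2) g'(d) with b = a + 1. This g is of order
  ln(d/b) / d; shearer_g' is its derivative in d.\<close>
definition shearer_g :: "real \<Rightarrow> real \<Rightarrow> real" where
  "shearer_g b d = ln (exp 2 + d / b) / (20 * (b * exp 2 + d))"

definition shearer_g' :: "real \<Rightarrow> real \<Rightarrow> real" where
  "shearer_g' b d = (1 - ln (exp 2 + d / b)) / (20 * (b * exp 2 + d)^2)"

lemma shearer_g_eq:
  assumes "b \<ge> 1"
  shows "shearer_g b d = (ln (exp 2 + d/b) / (exp 2 + d/b)) / (20 * b)"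
proof -
  have "b * exp 2 + d = b * (exp 2 + d/b)" using assms by (simp add: algebra_simps)
  thus ?thesis unfolding shearer_g_def by (simp add: ac_simps)
qed

lemma shearer_g'_eq:
  assumes "b \<ge> 1"
  shows "shearer_g' b d = ln_div_self_deriv (exp 2 + d/b) / (20 * b^2)"
proof -
  have "b * exp 2 + d = b * (exp 2 + d/b)" using assms by (simp add: algebra_simps)
  thus ?thesis unfolding shearer_g'_def ln_div_self_deriv_def by (simp add: power_mult_distrib ac_simps)
qed

lemma shearer_g'_nonpos:
  assumes "b \<ge> 1" "d \<ge> 0" shows "shearer_g' b d \<le> 0"
proof -
  have "2 \<le> ln (exp 2 + d / b)" using assms by (intro two_le_ln) simp
  thus ?thesis unfolding shearer_g'_def by (intro divide_nonpos_nonneg) simp_all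
qed

lemma shearer_g_above_tangent:
  assumes "b \<ge> 1" "d0 \<ge> 0" "d1 \<ge> 0"
  shows "shearer_g b d0 + shearer_g' b d0 * (d1 - d0) \<le> shearer_g b d1"
proof -
  define y0 where "y0 = exp 2 + d0/b"
  define y1 where "y1 = exp 2 + d1/b"
  have "exp 2 \<le> y0" "exp 2 \<le> y1" using assms by (auto simp: y0_def y1_def)
  have "d1 - d0 = b * (y1 - y0)" using assms by (simp add: y0_def y1_def field_simps)
  moreover have "D / (20 * b^2) * (b * z) = D * z / (20 * b)" for D z
    using assms(1) by (simp add: power2_eq_square)
  ultimately have "shearer_g' b d0 * (d1 - d0) = ln_div_self_deriv y0 * (y1 - y0) / (20 * b)"
    unfolding shearer_g'_eq[OF assms(1)] y0_def by simp
  hence "shearer_g b d0 + shearer_g' b d0 * (d1 - d0)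
      = (ln y0 / y0 + ln_div_self_deriv y0 * (y1 - y0)) / (20 * b)"
    using shearer_g_eq[OF assms(1)] by (simp add: y0_def add_divide_distrib)
  also have "\<dots> \<le> (ln y1 / y1) / (20 * b)"
    using ln_div_self_above_tangent[OF \<open>exp 2 \<le> y0\<close> \<open>exp 2 \<le> y1\<close>] assms(1)
    by (intro divide_right_mono) auto
  also have "\<dots> = shearer_g b d1" using shearer_g_eq[OF assms(1)] by (simp add: y1_def)
  finally show ?thesis .
qed

lemma shearer_g_above_tangent_mult:
  assumes "k \<ge> 0" "x \<ge> 0" "k = 0 \<Longrightarrow> x = 0" "b \<ge> 1" "d \<ge> 0"
  shows "k * shearer_g b d + shearer_g' b d * (x - k * d) \<le> k * shearer_g b (x / k)"
proof (cases "k = 0")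
  case False
  hence "k > 0" using assms(1) by simp
  have "k * shearer_g b d + shearer_g' b d * (x - k * d)
      = k * (shearer_g b d + shearer_g' b d * (x / k - d))"
    using \<open>k > 0\<close> by (simp add: algebra_simps)
  also have "\<dots> \<le> k * shearer_g b (x / k)"
    using shearer_g_above_tangent[OF assms(4,5)] assms(2) \<open>k > 0\<close> by (intro mult_left_mono) auto
  finally show ?thesis .
qed (use assms(3) in simp)

lemma shearer_g_ode:
  assumes b: "b \<ge> 1" and d: "d \<ge> 0"
  shows "(d + 1) * shearer_g b d \<le> 1 - shearer_g' b d * (d^2 - b * d)"
proof -
  define y where "y = exp 2 + d / b"
  define Y where "Y = b * exp 2 + d"
  have Y_eq: "Y = b * y" using b unfolding Y_def y_def by (simp add: field_simps)
  have "exp 2 \<le> y" using b d by (simp add: y_def)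
  hence ln_y: "2 \<le> ln y" and y_pos: "0 < y" using two_le_ln exp_gt_zero[of 2] by (auto, linarith)
  have "1 \<le> b * exp 2" using b by (intro mult_ge1_I) auto
  hence dY: "d + 1 \<le> Y" and Y_pos: "0 < Y" using d unfolding Y_def by linarith+
  have "(d + 1) * shearer_g b d = ln y / 20 * ((d + 1) / Y)"
    unfolding shearer_g_def Y_def y_def by simp
  also have "\<dots> \<le> ln y / 20" using dY Y_pos ln_y by (intro mult_left_le) auto
  finally have lhs: "(d + 1) * shearer_g b d \<le> ln y / 20" .
  have "Y^2 - (2 * exp 2 + 1) * b * Y \<le> d^2 - b * d"
    using b unfolding Y_def by (simp add: algebra_simps power2_eq_square)
  moreover have "0 \<le> (ln y - 1) / (20 * Y^2)" using ln_y by simp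
  ultimately have mid: "(ln y - 1) / (20 * Y^2) * (Y^2 - (2 * exp 2 + 1) * b * Y)
      \<le> (ln y - 1) / (20 * Y^2) * (d^2 - b * d)"
    by (rule mult_left_mono)
  have eq: "(ln y - 1) / (20 * Y^2) * (Y^2 - (2 * exp 2 + 1) * b * Y)
      = ln y / 20 - 1 / 20 - (2 * exp 2 + 1) * ((ln y - 1) / y) / 20"
    using Y_pos y_pos b unfolding Y_eq by (simp add: field_simps power2_eq_square)
  have "(2 * exp 2 + 1) * ((ln y - 1) / y) \<le> 19 * 1"
  proof (rule mult_mono)
    show "(ln y - 1) / y \<le> 1" using ln_le_minus_one[OF y_pos] y_pos by simp
  qed (use exp2_le_9 ln_y y_pos in auto)
  moreover have "\<And>M B T. M = ln y / 20 - 1 / 20 - T / 20 \<Longrightarrow> T \<le> 19 * 1 \<Longrightarrow> M \<le> B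
      \<Longrightarrow> ln y / 20 \<le> 1 + B" by linarith
  ultimately have "ln y / 20 \<le> 1 + (ln y - 1) / (20 * Y^2) * (d^2 - b * d)"
    using eq mid by blast
  moreover have "shearer_g' b d = - ((ln y - 1) / (20 * Y^2))"
    unfolding shearer_g'_def y_def Y_def by (simp add: minus_divide_left)
  ultimately have "ln y / 20 \<le> 1 - shearer_g' b d * (d^2 - b * d)"
    by (simp only: mult_minus_left diff_minus_eq_add)
  with lhs show ?thesis by linarith
qed

text \<open>The right-hand side bounds 1 + |W| g(d_W) from below when v and its neighbours are deleted
  (d_v is the degree of v, S_v the degree sum over its neighbours). Averaging over v, with
  \<Sum> d_v^2 \<ge> n d^2 and the differential inequality of g, shows that some v does as well as n g(d).\<close>
lemma exists_vertex_shearer_step: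
  fixes dv Sv :: "'a \<Rightarrow> real"
  assumes V: "finite V" "V \<noteq> {}" and n: "n = real (card V)"
    and sum_dv: "(\<Sum>v\<in>V. dv v) = n * d"
    and sum_Sv: "(\<Sum>v\<in>V. Sv v) = (\<Sum>v\<in>V. (dv v)^2)"
    and s: "s \<le> 0" and ode: "(d + 1) * G \<le> 1 - s * (d^2 - (a + 1) * d)"
  shows "\<exists>v\<in>V. n * G \<le> 1 + (n - 1 - dv v) * G + s * (n * d - 2 * Sv v + a * dv v - (n - 1 - dv v) * d)"
proof (rule ccontr)
  define Q where "Q v = 1 + (n - 1 - dv v) * G + s * (n * d - 2 * Sv v + a * dv v - (n - 1 - dv v) * d)"
    for v
  define c0 where "c0 = 1 + (n - 1) * G + s * d"
  define c1 where "c1 = - G + s * a + s * d"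
  have n_pos: "n > 0" using V by (simp add: n card_gt_0_iff)
  have "Q v = c0 + c1 * dv v - 2 * s * Sv v" for v
    unfolding Q_def c0_def c1_def by (simp add: algebra_simps)
  hence "(\<Sum>v\<in>V. Q v) = n * c0 + c1 * (n * d) - 2 * s * (\<Sum>v\<in>V. (dv v)^2)"
    by (simp add: sum.distrib sum_subtractf sum_dv sum_Sv n flip: sum_distrib_left)
  moreover have "(n * d)^2 \<le> (\<Sum>v\<in>V. (dv v)^2) * n"
    using sum_squared_le_sum_of_squares[of dv V] by (simp add: sum_dv n)
  hence "n * d^2 \<le> (\<Sum>v\<in>V. (dv v)^2)"
    using n_pos by (simp add: power2_eq_square mult.commute mult.left_commute)
  hence "- 2 * s * (n * d^2) \<le> - 2 * s * (\<Sum>v\<in>V. (dv v)^2)"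
    using s by (intro mult_left_mono) auto
  moreover have "n * c0 + c1 * (n * d) - 2 * s * (n * d^2) - n * (n * G)
      = n * (1 - (d + 1) * G - s * (d^2 - (a + 1) * d))"
    unfolding c0_def c1_def by (simp add: algebra_simps power2_eq_square)
  moreover have "0 \<le> n * (1 - (d + 1) * G - s * (d^2 - (a + 1) * d))"
    using n_pos ode by simp
  ultimately have "(\<Sum>v\<in>V. n * G) \<le> (\<Sum>v\<in>V. Q v)"
    by (simp add: n)
  moreover assume "\<not> (\<exists>v\<in>V. n * G \<le> Q v)"
  hence "(\<Sum>v\<in>V. Q v) < (\<Sum>v\<in>V. n * G)"
    using V by (intro sum_strict_mono) (auto simp: not_le)
  ultimately show False by linarith
qed

section \<open>Graphs\<close>

definition nbhd :: "(nat \<Rightarrow> nat \<Rightarrow> bool) \<Rightarrow> nat \<Rightarrow> nat set" where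
  "nbhd E v = {u. E v u}"

definition deg :: "(nat \<Rightarrow> nat \<Rightarrow> bool) \<Rightarrow> nat \<Rightarrow> nat" where
  "deg E v = card (nbhd E v)"

definition degree_sum :: "nat set \<Rightarrow> (nat \<Rightarrow> nat \<Rightarrow> bool) \<Rightarrow> nat" where
  "degree_sum V E = (\<Sum>v\<in>V. deg E v)"

definition independent_set :: "nat set \<Rightarrow> (nat \<Rightarrow> nat \<Rightarrow> bool) \<Rightarrow> nat set \<Rightarrow> bool" where
  "independent_set V E S \<longleftrightarrow> S \<subseteq> V \<and> (\<forall>u\<in>S. \<forall>w\<in>S. \<not> E u w)"

definition induced :: "(nat \<Rightarrow> nat \<Rightarrow> bool) \<Rightarrow> nat set \<Rightarrow> nat \<Rightarrow> nat \<Rightarrow> bool" where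
  "induced E W = (\<lambda>u w. E u w \<and> u \<in> W \<and> w \<in> W)"

lemma simple_graph_finite: "simple_graph V E \<Longrightarrow> finite V"
  unfolding simple_graph_def by auto

lemma simple_graph_sym: "simple_graph V E \<Longrightarrow> E u v \<Longrightarrow> E v u"
  unfolding simple_graph_def by auto

lemma simple_graph_edge_in: "simple_graph V E \<Longrightarrow> E u v \<Longrightarrow> u \<in> V \<and> v \<in> V"
  unfolding simple_graph_def by auto

lemma simple_graph_irrefl: "simple_graph V E \<Longrightarrow> \<not> E v v"
  unfolding simple_graph_def by auto

lemma simple_graph_nbhd_subset: "simple_graph V E \<Longrightarrow> nbhd E v \<subseteq> V"
  unfolding simple_graph_def nbhd_def by auto

lemma simple_graph_finite_nbhd: "simple_graph V E \<Longrightarrow> finite (nbhd E v)"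
  using simple_graph_nbhd_subset simple_graph_finite finite_subset by metis

lemma simple_graph_not_in_nbhd: "simple_graph V E \<Longrightarrow> v \<notin> nbhd E v"
  unfolding simple_graph_def nbhd_def by auto

lemma simple_graph_induced: "simple_graph V E \<Longrightarrow> W \<subseteq> V \<Longrightarrow> simple_graph W (induced E W)"
  unfolding simple_graph_def induced_def using finite_subset by blast

lemma nbhd_induced_subset: "nbhd (induced E W) u \<subseteq> nbhd E u"
  unfolding nbhd_def induced_def by auto

lemma independent_set_induced: "W \<subseteq> V \<Longrightarrow> independent_set W (induced E W) S \<Longrightarrow> independent_set V E S"
  unfolding independent_set_def induced_def by blast

lemma has_clique_induced: "W \<subseteq> V \<Longrightarrow> has_clique W (induced E W) r \<Longrightarrow> has_clique V E r"
  unfolding has_clique_def induced_def by blast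

lemma degree_sum_eq_card_arcs: "simple_graph V E \<Longrightarrow> degree_sum V E = card (Sigma V (nbhd E))"
  unfolding degree_sum_def deg_def using simple_graph_finite simple_graph_finite_nbhd by simp

lemma sum_deg_nbhd_eq_sum_deg_squared:
  assumes G: "simple_graph V E"
  shows "(\<Sum>v\<in>V. \<Sum>u\<in>nbhd E v. real (deg E u)) = (\<Sum>u\<in>V. real (deg E u)^2)"
proof -
  have nbhd_eq: "nbhd E v = {u \<in> V. E v u}" for v
    using simple_graph_edge_in[OF G] by (auto simp: nbhd_def)
  have "(\<Sum>v\<in>V. \<Sum>u\<in>nbhd E v. real (deg E u)) = (\<Sum>u\<in>V. \<Sum>v\<in>{v \<in> V. E v u}. real (deg E u))"
    unfolding nbhd_eq using simple_graph_finite[OF G] by (intro sum.swap_restrict)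
  also have "\<dots> = (\<Sum>u\<in>V. real (deg E u)^2)"
  proof (rule sum.cong[OF refl])
    fix u assume "u \<in> V"
    have "{v \<in> V. E v u} = nbhd E u" using nbhd_eq simple_graph_sym[OF G] by auto
    thus "(\<Sum>v\<in>{v \<in> V. E v u}. real (deg E u)) = real (deg E u)^2"
      by (simp add: deg_def power2_eq_square)
  qed
  finally show ?thesis .
qed

section \<open>Shearer's bound\<close>

lemma independent_insert_closed_nbhd:
  assumes G: "simple_graph V E" and v: "v \<in> V"
    and W: "W = V - insert v (nbhd E v)" and S: "independent_set W (induced E W) S"
  shows "independent_set V E (insert v S)"
  using S simple_graph_sym[OF G] simple_graph_irrefl[OF G] v
  unfolding W independent_set_def induced_def nbhd_def by blast

lemma card_remove_closed_nbhd:
  assumes G: "simple_graph V E" and v: "v \<in> V" and W: "W = V - insert v (nbhd E v)"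
  shows "card W + 1 + deg E v = card V"
proof -
  have sub: "insert v (nbhd E v) \<subseteq> V" using simple_graph_nbhd_subset[OF G] v by auto
  have "card (insert v (nbhd E v)) = 1 + deg E v"
    using simple_graph_finite_nbhd[OF G] simple_graph_not_in_nbhd[OF G] unfolding deg_def by simp
  moreover have "card W = card V - card (insert v (nbhd E v))"
    unfolding W by (rule card_Diff_subset[OF finite_subset[OF sub simple_graph_finite[OF G]] sub])
  moreover have "card (insert v (nbhd E v)) \<le> card V"
    using card_mono[OF simple_graph_finite[OF G] sub] .
  ultimately show ?thesis by linarith
qed

text \<open>Every arc with an end in the neighbourhood of v disappears; counting them as twice the degree
  sum over the neighbourhood overcounts only the arcs inside it, at most a per neighbour.\<close>
lemma degree_sum_remove_closed_nbhd:
  assumes G: "simple_graph V E" and v: "v \<in> V" and W: "W = V - insert v (nbhd E v)"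
    and codeg: "\<forall>u w. E u w \<longrightarrow> real (card (nbhd E u \<inter> nbhd E w)) \<le> a"
  shows "real (degree_sum W (induced E W))
    \<le> real (degree_sum V E) - 2 * (\<Sum>u\<in>nbhd E v. real (deg E u)) + a * real (deg E v)"
proof -
  define A where "A = Sigma V (nbhd E)"
  define P where "P = Sigma (nbhd E v) (nbhd E)"
  have fin_A: "finite A" unfolding A_def
    using simple_graph_finite[OF G] simple_graph_finite_nbhd[OF G] by auto
  have P_sub: "P \<subseteq> A" "prod.swap ` P \<subseteq> A" unfolding P_def A_def
    using simple_graph_nbhd_subset[OF G] simple_graph_edge_in[OF G] simple_graph_sym[OF G]
    by (auto simp: nbhd_def)
  have fin_P: "finite P" "finite (prod.swap ` P)" using finite_subset[OF _ fin_A] P_sub by auto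
  have card_P: "real (card P) = (\<Sum>u\<in>nbhd E v. real (deg E u))"
    unfolding P_def deg_def using simple_graph_finite_nbhd[OF G] by simp
  have card_swap: "card (prod.swap ` P) = card P" by (rule card_image) (auto simp: inj_on_def)
  have "P \<inter> prod.swap ` P = Sigma (nbhd E v) (\<lambda>u. nbhd E u \<inter> nbhd E v)"
    unfolding P_def using simple_graph_sym[OF G] by (auto simp: nbhd_def image_iff)
  hence "real (card (P \<inter> prod.swap ` P)) = (\<Sum>u\<in>nbhd E v. real (card (nbhd E u \<inter> nbhd E v)))"
    using simple_graph_finite_nbhd[OF G] by simp
  also have "\<dots> \<le> (\<Sum>u\<in>nbhd E v. a)"
    using codeg simple_graph_sym[OF G] by (intro sum_mono) (auto simp: nbhd_def)
  finally have card_int: "real (card (P \<inter> prod.swap ` P)) \<le> a * real (deg E v)"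
    by (simp add: deg_def mult.commute)
  have "Sigma W (nbhd (induced E W)) \<subseteq> A - (P \<union> prod.swap ` P)"
    unfolding A_def P_def W induced_def nbhd_def using simple_graph_sym[OF G] by (auto simp: image_iff)
  hence "degree_sum W (induced E W) \<le> card (A - (P \<union> prod.swap ` P))"
    using degree_sum_eq_card_arcs[OF simple_graph_induced[OF G]] card_mono[OF finite_Diff[OF fin_A]]
    by (simp add: W)
  also have "\<dots> = card A - card (P \<union> prod.swap ` P)"
    using P_sub fin_P by (intro card_Diff_subset) auto
  finally have "real (degree_sum W (induced E W)) \<le> real (card A) - real (card (P \<union> prod.swap ` P))"
    using card_mono[OF fin_A, of "P \<union> prod.swap ` P"] P_sub by (simp add: of_nat_diff)
  moreover have "card (P \<union> prod.swap ` P) + card (P \<inter> prod.swap ` P) = card P + card (prod.swap ` P)"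
    using card_Un_Int[OF fin_P] by simp
  moreover have "card A = degree_sum V E" unfolding A_def by (rule degree_sum_eq_card_arcs[OF G, symmetric])
  ultimately show ?thesis using card_P card_swap card_int by linarith
qed

lemma codegree_induced_le:
  assumes G: "simple_graph V E"
  shows "card (nbhd (induced E W) u \<inter> nbhd (induced E W) w) \<le> card (nbhd E u \<inter> nbhd E w)"
  using nbhd_induced_subset simple_graph_finite_nbhd[OF G] by (intro card_mono) blast+

lemma shearer_good_vertex:
  assumes a: "a \<ge> 0" and G: "simple_graph V E" and "V \<noteq> {}"
    and codeg: "\<forall>u w. E u w \<longrightarrow> real (card (nbhd E u \<inter> nbhd E w)) \<le> a"
  shows "\<exists>v\<in>V. real (card V) * shearer_g (a + 1) (real (degree_sum V E) / real (card V))
    \<le> 1 + real (card (V - insert v (nbhd E v))) * shearer_g (a + 1)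
      (real (degree_sum (V - insert v (nbhd E v)) (induced E (V - insert v (nbhd E v))))
        / real (card (V - insert v (nbhd E v))))"
proof -
  define n where "n = real (card V)"
  define d where "d = real (degree_sum V E) / n"
  define dv where "dv v = real (deg E v)" for v
  define Sv where "Sv v = (\<Sum>u\<in>nbhd E v. real (deg E u))" for v
  have n_pos: "n > 0" using assms(3) simple_graph_finite[OF G] by (simp add: n_def card_gt_0_iff)
  have b: "a + 1 \<ge> 1" and d: "d \<ge> 0" using a by (auto simp: d_def n_def)
  have s: "shearer_g' (a + 1) d \<le> 0" using shearer_g'_nonpos[OF b d] .
  have "\<exists>v\<in>V. n * shearer_g (a + 1) d \<le> 1 + (n - 1 - dv v) * shearer_g (a + 1) d
      + shearer_g' (a + 1) d * (n * d - 2 * Sv v + a * dv v - (n - 1 - dv v) * d)"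
  proof (rule exists_vertex_shearer_step[OF simple_graph_finite[OF G] assms(3) n_def _ _ s])
    show "(\<Sum>v\<in>V. dv v) = n * d" using n_pos by (simp add: d_def dv_def degree_sum_def)
    show "(\<Sum>v\<in>V. Sv v) = (\<Sum>v\<in>V. (dv v)^2)"
      unfolding Sv_def dv_def by (rule sum_deg_nbhd_eq_sum_deg_squared[OF G])
    show "(d + 1) * shearer_g (a + 1) d \<le> 1 - shearer_g' (a + 1) d * (d^2 - (a + 1) * d)"
      by (rule shearer_g_ode[OF b d])
  qed
  then obtain v where v: "v \<in> V" and Qv: "n * shearer_g (a + 1) d \<le> 1 + (n - 1 - dv v) * shearer_g (a + 1) d
      + shearer_g' (a + 1) d * (n * d - 2 * Sv v + a * dv v - (n - 1 - dv v) * d)" by blast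
  define W where "W = V - insert v (nbhd E v)"
  define k where "k = real (card W)"
  define x where "x = real (degree_sum W (induced E W))"
  have k: "k = n - 1 - dv v" using card_remove_closed_nbhd[OF G v W_def] unfolding k_def n_def dv_def by linarith
  have "x = 0" if "k = 0"
  proof -
    have "W = {}" using that finite_subset[of W V] simple_graph_finite[OF G] by (auto simp: k_def W_def)
    thus ?thesis by (simp add: x_def degree_sum_def)
  qed
  hence "k * shearer_g (a + 1) d + shearer_g' (a + 1) d * (x - k * d) \<le> k * shearer_g (a + 1) (x / k)"
    by (intro shearer_g_above_tangent_mult[OF _ _ _ b d]) (auto simp: k_def x_def)
  moreover have "x \<le> n * d - 2 * Sv v + a * dv v"
    using degree_sum_remove_closed_nbhd[OF G v W_def codeg] n_pos by (simp add: x_def d_def Sv_def dv_def)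
  hence "shearer_g' (a + 1) d * (n * d - 2 * Sv v + a * dv v - k * d) \<le> shearer_g' (a + 1) d * (x - k * d)"
    using s by (intro mult_left_mono_neg) auto
  ultimately have "n * shearer_g (a + 1) d \<le> 1 + k * shearer_g (a + 1) (x / k)"
    using Qv[folded k] by linarith
  thus ?thesis using v unfolding n_def d_def k_def x_def W_def by blast
qed

theorem shearer_independent_set:
  assumes a: "a \<ge> 0"
  shows "simple_graph V E \<Longrightarrow> \<forall>u w. E u w \<longrightarrow> real (card (nbhd E u \<inter> nbhd E w)) \<le> a \<Longrightarrow>
    \<exists>S. independent_set V E S \<and>
      real (card V) * shearer_g (a + 1) (real (degree_sum V E) / real (card V)) \<le> real (card S)"
proof (induction "card V" arbitrary: V E rule: less_induct)
  case less
  note G = less.prems(1) and codeg = less.prems(2)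
  show ?case
  proof (cases "V = {}")
    case True then show ?thesis by (intro exI[of _ "{}"]) (auto simp: independent_set_def)
  next
    case False
    then obtain v where v: "v \<in> V" and good:
      "real (card V) * shearer_g (a + 1) (real (degree_sum V E) / real (card V))
        \<le> 1 + real (card (V - insert v (nbhd E v))) * shearer_g (a + 1)
          (real (degree_sum (V - insert v (nbhd E v)) (induced E (V - insert v (nbhd E v))))
            / real (card (V - insert v (nbhd E v))))"
      using shearer_good_vertex[OF a G _ codeg] by blast
    define W where "W = V - insert v (nbhd E v)"
    have card_W: "card W < card V" using card_remove_closed_nbhd[OF G v W_def] by linarith
    have codeg_W: "\<forall>u w. induced E W u w \<longrightarrow>
        real (card (nbhd (induced E W) u \<inter> nbhd (induced E W) w)) \<le> a"
    proof (intro allI impI)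
      fix u w assume "induced E W u w"
      hence "real (card (nbhd E u \<inter> nbhd E w)) \<le> a" using codeg by (simp add: induced_def)
      thus "real (card (nbhd (induced E W) u \<inter> nbhd (induced E W) w)) \<le> a"
        using codegree_induced_le[OF G, of W u w] by linarith
    qed
    obtain S where S: "independent_set W (induced E W) S" and S_card:
      "real (card W) * shearer_g (a + 1) (real (degree_sum W (induced E W)) / real (card W)) \<le> real (card S)"
      using less.hyps[OF card_W simple_graph_induced[OF G] codeg_W] W_def by blast
    have "v \<notin> S" "finite S"
      using S finite_subset[of S V] simple_graph_finite[OF G] unfolding independent_set_def W_def by auto
    thus ?thesis using independent_insert_closed_nbhd[OF G v W_def S] good S_card
      by (intro exI[of _ "insert v S"]) (simp add: W_def[symmetric])
  qed
qed

lemma shearer_g_antimono: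
  assumes "b \<ge> 1" "0 \<le> x" "x \<le> D"
  shows "shearer_g b D \<le> shearer_g b x"
proof -
  have "0 \<le> shearer_g' b D * (x - D)"
    using shearer_g'_nonpos[of b D] assms by (intro mult_nonpos_nonpos) auto
  thus ?thesis using shearer_g_above_tangent[of b D x] assms by linarith
qed

corollary shearer_independent_set_max_degree:
  assumes "a \<ge> 0" and G: "simple_graph V E"
    and codeg: "\<forall>u w. E u w \<longrightarrow> real (card (nbhd E u \<inter> nbhd E w)) \<le> a"
    and deg: "\<forall>v\<in>V. real (deg E v) \<le> D"
  shows "\<exists>S. independent_set V E S \<and> real (card V) * shearer_g (a + 1) D \<le> real (card S)"
proof -
  obtain S where S: "independent_set V E S"
    and S_card: "real (card V) * shearer_g (a + 1) (real (degree_sum V E) / real (card V)) \<le> real (card S)"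
    using shearer_independent_set[OF assms(1-3)] by blast
  have "real (degree_sum V E) \<le> real (card V) * D"
    using sum_mono[of V "\<lambda>v. real (deg E v)" "\<lambda>_. D"] deg by (simp add: degree_sum_def)
  hence "shearer_g (a + 1) D \<le> shearer_g (a + 1) (real (degree_sum V E) / real (card V))"
    if "V \<noteq> {}"
    using that simple_graph_finite[OF G] assms(1)
    by (intro shearer_g_antimono) (auto simp: divide_le_eq card_gt_0_iff mult.commute)
  hence "real (card V) * shearer_g (a + 1) D \<le> real (card S)"
    using S_card by (cases "V = {}") (auto intro: order_trans[OF mult_left_mono])
  with S show ?thesis by blast
qed

section \<open>Ramsey bounds\<close>

lemma ln_le_two_sqrt: "t > 0 \<Longrightarrow> ln t \<le> 2 * sqrt t"
  using ln_le_minus_one[of "sqrt t"] by (simp add: ln_sqrt)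

lemma sqrt_le_two_div_ln:
  assumes "t > 1" shows "sqrt t / 2 \<le> t / ln t"
proof -
  have "sqrt t * ln t \<le> sqrt t * (2 * sqrt t)"
    using ln_le_two_sqrt[of t] assms by (intro mult_left_mono) auto
  also have "\<dots> = 2 * t" using assms by simp
  finally show ?thesis using assms by (simp add: field_simps)
qed

lemma shearer_g_lower_bound:
  assumes b: "b \<ge> 1" and t: "t > 0" and "exp 2 \<le> D / b" "sqrt (sqrt t) \<le> D / b"
  shows "ln t / (160 * D) \<le> shearer_g b D"
proof -
  have bD: "b * exp 2 \<le> D" using assms(3) b by (simp add: le_divide_eq mult.commute)
  moreover have bK: "b * exp 2 > 0" using b by simp
  ultimately have D: "D > 0" by linarith
  have denom: "20 * (b * exp 2 + D) \<le> 40 * D" using bD by (simp add: algebra_simps)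
  have num: "ln t / 4 \<le> ln (exp 2 + D / b)"
  proof -
    have "ln t / 4 = ln (sqrt (sqrt t))" using t by (simp add: ln_sqrt)
    also have "\<dots> \<le> ln (exp 2 + D / b)"
    proof (subst ln_le_cancel_iff)
      show "0 < exp 2 + D / b" using D b by (intro add_pos_pos) auto
      show "sqrt (sqrt t) \<le> exp 2 + D / b" using assms(4) exp_gt_zero[of "2::real"] by linarith
    qed (use t in auto)
    finally show ?thesis .
  qed
  have "ln t / (160 * D) = (ln t / 4) / (40 * D)" by simp
  also have "\<dots> \<le> ln (exp 2 + D / b) / (40 * D)" using num D by (intro divide_right_mono) auto
  also have "\<dots> \<le> ln (exp 2 + D / b) / (20 * (b * exp 2 + D))"
  proof (rule divide_left_mono[OF denom])
    show "0 \<le> ln (exp 2 + D / b)" using two_le_ln[of "exp 2 + D / b"] D b by simp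
    show "0 < 40 * D * (20 * (b * exp 2 + D))" using D bK by (intro mult_pos_pos) auto
  qed
  finally show ?thesis by (simp add: shearer_g_def)
qed

lemma t_div_ln_lower_bounds:
  fixes k t K :: real
  assumes k: "k > 0" and t: "t > 1" and K: "K \<ge> 0"
    and t_ge: "(2 / k)^4 \<le> t" "(2 * K / k)^2 \<le> t"
  shows "K \<le> k * (t / ln t)" "sqrt (sqrt t) \<le> k * (t / ln t)"
proof -
  have "k * (sqrt t / 2) \<le> k * (t / ln t)" using sqrt_le_two_div_ln[OF t] k by (intro mult_left_mono) auto
  moreover have "2 * K / k \<le> sqrt t" using t_ge(2) K k by (intro real_le_rsqrt) auto
  hence "K \<le> k * (sqrt t / 2)" using k by (simp add: field_simps)
  moreover have "sqrt (sqrt t) \<le> k * (sqrt t / 2)"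
  proof -
    define s where "s = sqrt (sqrt t)"
    have "2 / k \<le> s"
      using t_ge(1) k unfolding s_def by (intro real_le_rsqrt) (simp add: power_mult[symmetric])
    hence "1 \<le> k * s / 2" using k by (simp add: field_simps)
    hence "1 * s \<le> (k * s / 2) * s" using t by (intro mult_right_mono) (auto simp: s_def)
    hence "s \<le> k * (s * s / 2)" by (simp add: mult_ac)
    thus ?thesis unfolding s_def using t by simp
  qed
  ultimately show "K \<le> k * (t / ln t)" "sqrt (sqrt t) \<le> k * (t / ln t)" by linarith+
qed

lemma ramsey_step_ratio:
  fixes L t A C1 C2 :: real
  assumes L: "1 \<le> L" "L \<le> t" and A: "0 \<le> A" "A \<le> C2 * t^q / L^(q - 1)"
    and C: "C1 \<ge> 0" "C2 \<ge> 0"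
  shows "C1 / (C2 + 1) * (t / L) \<le> C1 * t^(q + 1) / L^q / (A + 1)"
proof -
  define X where "X = t^q * L / L^q"
  have "L^q \<le> t^q * L" using L power_mono[OF L(2), of q]
    by (smt (verit) mult_le_cancel_left1 zero_le_power)
  hence X: "1 \<le> X" using L by (simp add: X_def)
  have X_ge: "t^q / L^(q - 1) \<le> X"
  proof (cases q)
    case 0 thus ?thesis using L by (simp add: X_def)
  next
    case (Suc p) thus ?thesis using L by (simp add: X_def)
  qed
  have "A \<le> C2 * (t^q / L^(q - 1))" using A(2) by simp
  also have "\<dots> \<le> C2 * X" using mult_left_mono[OF X_ge C(2)] .
  finally have "A \<le> C2 * X" .
  hence "A + 1 \<le> (C2 + 1) * X" using X by (simp add: algebra_simps)
  hence "C1 * t^(q + 1) / L^q / ((C2 + 1) * X) \<le> C1 * t^(q + 1) / L^q / (A + 1)"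
    using A L C by (intro divide_left_mono) auto
  moreover have "C1 * t^(q + 1) / L^q / ((C2 + 1) * X) = C1 / (C2 + 1) * (t / L)"
  proof -
    obtain M where M: "M = C2 + 1" "M > 0" using C by force
    have "t^q > 0" "L > 0" using L by auto
    thus ?thesis unfolding M(1)[symmetric] using M(2) by (simp add: X_def field_simps)
  qed
  ultimately show ?thesis by simp
qed

text \<open>R(r, t) \<le> C t^(r-1) / (ln t)^(r-2) for all t \<ge> T, stated for graphs without independent
  sets of size t. (For r = 1 the truncated exponent r - 2 is 0.)\<close>
definition ramsey_bound :: "nat \<Rightarrow> real \<Rightarrow> real \<Rightarrow> bool" where
  "ramsey_bound r C T \<longleftrightarrow> (\<forall>t\<ge>T. \<forall>V E. simple_graph V E \<longrightarrow> \<not> has_clique V E r \<longrightarrow>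
     (\<forall>S. independent_set V E S \<longrightarrow> real (card S) < t) \<longrightarrow> real (card V) \<le> C * t^(r-1) / (ln t)^(r-2))"

lemma ramsey_bound_induced:
  assumes "ramsey_bound r C T" "T \<le> t" "simple_graph V E" "W \<subseteq> V"
    "\<not> has_clique W (induced E W) r" "\<forall>S. independent_set V E S \<longrightarrow> real (card S) < t"
  shows "real (card W) \<le> C * t^(r-1) / (ln t)^(r-2)"
  using assms simple_graph_induced[OF assms(3,4)] independent_set_induced[OF assms(4)]
  unfolding ramsey_bound_def by blast

lemma has_clique_insert_nbhd:
  assumes G: "simple_graph V E" and v: "v \<in> V" and H: "has_clique (nbhd E v) (induced E (nbhd E v)) k"
  shows "has_clique V E (Suc k)"
proof -
  obtain S where S: "S \<subseteq> nbhd E v" "card S = k" "\<forall>x\<in>S. \<forall>y\<in>S. x \<noteq> y \<longrightarrow> E x y"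
    using H unfolding has_clique_def induced_def by blast
  have "finite S" using S(1) simple_graph_finite_nbhd[OF G] finite_subset by blast
  moreover have "v \<notin> S" using S(1) simple_graph_not_in_nbhd[OF G] by blast
  moreover have "\<forall>x\<in>insert v S. \<forall>y\<in>insert v S. x \<noteq> y \<longrightarrow> E x y"
    using S(1,3) simple_graph_sym[OF G] unfolding nbhd_def by blast
  moreover have "insert v S \<subseteq> V" using S(1) simple_graph_nbhd_subset[OF G] v by blast
  ultimately show ?thesis using S(2) unfolding has_clique_def by (intro exI[of _ "insert v S"]) simp
qed

lemma has_clique_insert_common_nbhd:
  assumes G: "simple_graph V E" and e: "E u w"
    and H: "has_clique (nbhd E u \<inter> nbhd E w) (induced E (nbhd E u \<inter> nbhd E w)) k"
  shows "has_clique V E (Suc (Suc k))"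
proof -
  obtain S where S: "S \<subseteq> nbhd E u \<inter> nbhd E w" "card S = k" "\<forall>x\<in>S. \<forall>y\<in>S. x \<noteq> y \<longrightarrow> E x y"
    using H unfolding has_clique_def induced_def by blast
  have "finite S" using S(1) simple_graph_finite_nbhd[OF G, of u] finite_subset by blast
  moreover have "u \<notin> S" "w \<notin> S" "u \<noteq> w"
    using S(1) simple_graph_not_in_nbhd[OF G] simple_graph_irrefl[OF G] e by blast+
  moreover have "\<forall>x\<in>insert u (insert w S). \<forall>y\<in>insert u (insert w S). x \<noteq> y \<longrightarrow> E x y"
    using S(1,3) simple_graph_sym[OF G] e unfolding nbhd_def by blast
  moreover have "insert u (insert w S) \<subseteq> V"
    using S(1) simple_graph_nbhd_subset[OF G] simple_graph_edge_in[OF G e] by blast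
  ultimately show ?thesis using S(2) unfolding has_clique_def
    by (intro exI[of _ "insert u (insert w S)"]) simp
qed

lemma deg_codegree_le_of_ramsey_bound:
  assumes R1: "ramsey_bound (q + 2) C1 T1" and R2: "ramsey_bound (q + 1) C2 T2"
    and t: "T1 \<le> t" "T2 \<le> t" and G: "simple_graph V E" and no_clique: "\<not> has_clique V E (q + 3)"
    and alpha: "\<forall>S. independent_set V E S \<longrightarrow> real (card S) < t"
  shows "\<forall>v\<in>V. real (deg E v) \<le> C1 * t^(q + 1) / (ln t)^q"
    and "\<forall>u w. E u w \<longrightarrow> real (card (nbhd E u \<inter> nbhd E w)) \<le> C2 * t^q / (ln t)^(q - 1)"
proof -
  show "\<forall>v\<in>V. real (deg E v) \<le> C1 * t^(q + 1) / (ln t)^q"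
  proof
    fix v assume v: "v \<in> V"
    have "\<not> has_clique (nbhd E v) (induced E (nbhd E v)) (q + 2)"
      using has_clique_insert_nbhd[OF G v] no_clique by (auto simp: eval_nat_numeral)
    from ramsey_bound_induced[OF R1 t(1) G simple_graph_nbhd_subset[OF G] this alpha]
    show "real (deg E v) \<le> C1 * t^(q + 1) / (ln t)^q" by (simp add: deg_def)
  qed
  show "\<forall>u w. E u w \<longrightarrow> real (card (nbhd E u \<inter> nbhd E w)) \<le> C2 * t^q / (ln t)^(q - 1)"
  proof (intro allI impI)
    fix u w assume e: "E u w"
    have "\<not> has_clique (nbhd E u \<inter> nbhd E w) (induced E (nbhd E u \<inter> nbhd E w)) (q + 1)"
      using has_clique_insert_common_nbhd[OF G e] no_clique by (auto simp: eval_nat_numeral)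
    from ramsey_bound_induced[OF R2 t(2) G _ this alpha] simple_graph_nbhd_subset[OF G]
    show "real (card (nbhd E u \<inter> nbhd E w)) \<le> C2 * t^q / (ln t)^(q - 1)" by auto
  qed
qed

lemma ramsey_bound_step:
  assumes R1: "ramsey_bound (q + 2) C1 T1" and R2: "ramsey_bound (q + 1) C2 T2"
    and C1: "C1 \<ge> 1" and C2: "C2 \<ge> 0"
  shows "\<exists>T\<ge>3. ramsey_bound (q + 3) (160 * C1) T"
proof -
  define k where "k = C1 / (C2 + 1)"
  have k: "k > 0" using C1 C2 by (simp add: k_def)
  define T where "T = Max {3, T1, T2, (2 / k)^4, (2 * exp 2 / k)^2}"
  have "ramsey_bound (q + 3) (160 * C1) T" unfolding ramsey_bound_def
  proof (intro allI impI)
    fix t V E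
    assume t: "T \<le> t" and G: "simple_graph V E" and no_clique: "\<not> has_clique V E (q + 3)"
      and alpha: "\<forall>S. independent_set V E S \<longrightarrow> real (card S) < t"
    have t_ge: "3 \<le> t" "T1 \<le> t" "T2 \<le> t" "(2 / k)^4 \<le> t" "(2 * exp 2 / k)^2 \<le> t"
      using t by (auto simp: T_def)
    define L where "L = ln t"
    define D where "D = C1 * t^(q + 1) / L^q"
    define A where "A = C2 * t^q / L^(q - 1)"
    have L: "1 \<le> L" "L \<le> t"
      using t_ge(1) ln_le_minus_one[of t] ln_ge_iff[of t 1] exp_le unfolding L_def by auto
    have A: "0 \<le> A" using C2 L by (simp add: A_def)
    note bounds = deg_codegree_le_of_ramsey_bound[OF R1 R2 t_ge(2,3) G no_clique alpha,
        folded L_def, folded D_def A_def]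
    obtain S where S: "independent_set V E S" and S_card: "real (card V) * shearer_g (A + 1) D \<le> real (card S)"
      using shearer_independent_set_max_degree[OF A G bounds(2,1)] by blast
    have "k * (t / L) \<le> D / (A + 1)"
      using ramsey_step_ratio[OF L A _ _ C2] C1 by (simp add: k_def D_def A_def)
    moreover have "exp 2 \<le> k * (t / L)" "sqrt (sqrt t) \<le> k * (t / L)"
      using t_div_ln_lower_bounds[OF k _ _ t_ge(4,5)] t_ge(1) unfolding L_def by auto
    ultimately have "L / (160 * D) \<le> shearer_g (A + 1) D"
      using t_ge(1) A unfolding L_def by (intro shearer_g_lower_bound) auto
    hence "real (card V) * (L / (160 * D)) \<le> t"
      using S_card alpha S by (smt (verit) mult_left_mono of_nat_0_le_iff)
    moreover have "D > 0" using C1 L by (simp add: D_def)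
    ultimately have "real (card V) \<le> 160 * (t * D) / L" using L by (simp add: field_simps)
    also have "\<dots> = 160 * C1 * t^(q + 3 - 1) / L^(q + 3 - 2)"
      using L by (simp add: D_def field_simps eval_nat_numeral)
    finally show "real (card V) \<le> 160 * C1 * t^(q + 3 - 1) / (ln t)^(q + 3 - 2)" by (simp add: L_def)
  qed
  moreover have "3 \<le> T" by (simp add: T_def)
  ultimately show ?thesis by blast
qed

lemma ramsey_bound_one: "ramsey_bound 1 1 3"
  unfolding ramsey_bound_def
proof (intro allI impI)
  fix t :: real and V E assume no_clique: "\<not> has_clique V E 1"
  have "V = {}"
  proof (rule ccontr)
    assume "V \<noteq> {}"
    then obtain v where "v \<in> V" by blast
    hence "has_clique V E 1" unfolding has_clique_def by (intro exI[of _ "{v}"]) auto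
    thus False using no_clique by simp
  qed
  thus "real (card V) \<le> 1 * t^(1 - 1) / (ln t)^(1 - 2)" by simp
qed

lemma ramsey_bound_two: "ramsey_bound 2 1 3"
  unfolding ramsey_bound_def
proof (intro allI impI)
  fix t :: real and V E
  assume G: "simple_graph V E" and no_clique: "\<not> has_clique V E 2"
    and alpha: "\<forall>S. independent_set V E S \<longrightarrow> real (card S) < t"
  have "independent_set V E V" unfolding independent_set_def
  proof (intro conjI ballI notI subset_refl)
    fix u w assume "u \<in> V" "w \<in> V" "E u w"
    moreover have "u \<noteq> w" using \<open>E u w\<close> simple_graph_irrefl[OF G] by blast
    ultimately have "has_clique V E 2" using simple_graph_sym[OF G] unfolding has_clique_def
      by (intro exI[of _ "{u, w}"]) auto
    thus False using no_clique by simp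
  qed
  thus "real (card V) \<le> 1 * t^(2 - 1) / (ln t)^(2 - 2)" using alpha by fastforce
qed

theorem ramsey_bound_exists: "r \<ge> 1 \<Longrightarrow> \<exists>C T. C \<ge> 1 \<and> T \<ge> 3 \<and> ramsey_bound r C T"
proof (induction r rule: less_induct)
  case (less r)
  have "r = 1 \<or> r = 2 \<or> (\<exists>q. r = q + 3)" using less.prems by presburger
  moreover have ?case if r: "r = q + 3" for q
  proof -
    obtain C1 T1 where C1: "C1 \<ge> 1" "ramsey_bound (q + 2) C1 T1" using less.IH[of "q + 2"] r by auto
    obtain C2 T2 where C2: "C2 \<ge> 1" "ramsey_bound (q + 1) C2 T2" using less.IH[of "q + 1"] r by auto
    have "160 * C1 \<ge> 1" using C1(1) by simp
    thus ?thesis using ramsey_bound_step[OF C1(2) C2(2) C1(1)] C2(1) r by auto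
  qed
  ultimately show ?case using ramsey_bound_one ramsey_bound_two by force
qed

section \<open>Independent sets in K_r-free graphs\<close>

lemma root_threshold:
  fixes Z c k :: real and m :: nat
  assumes Z: "1 \<le> Z" "1 \<le> c * Z" and k: "Z ^ (2 * m) \<le> k" and m: "m \<ge> 1"
  shows "Z \<le> k powr (1 / (2 * real m))" "k powr (1 / (2 * real m)) \<le> c * k powr (1 / real m)"
proof -
  define w where "w = k powr (1 / (2 * real m))"
  have "Z ^ (2 * m) = Z powr (2 * real m)" using Z(1) powr_realpow[of Z "2 * m"] by simp
  hence "Z = (Z ^ (2 * m)) powr (1 / (2 * real m))" using Z(1) m by (simp add: powr_powr)
  also have "\<dots> \<le> w" unfolding w_def using k Z(1) by (intro powr_mono2) auto
  finally show Zw: "Z \<le> w" unfolding w_def .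
  have "w \<le> c * Z * w" using Z Zw by simp
  also have "\<dots> \<le> c * w * w"
  proof -
    have "c > 0" using Z mult_nonpos_nonneg[of c Z] by linarith
    thus ?thesis using Zw Z by (intro mult_right_mono mult_left_mono) auto
  qed
  also have "c * w * w = c * k powr (1 / real m)" unfolding w_def using m by (simp flip: powr_add)
  finally show "k powr (1 / (2 * real m)) \<le> c * k powr (1 / real m)" unfolding w_def .
qed

lemma power_of_threshold:
  fixes c k :: real and p :: nat
  assumes "k > 0" "ln k > 0"
  shows "(c * k powr (1 / real (p + 1)) * ln k powr (real p / real (p + 1)))^(p + 1) = c^(p + 1) * k * (ln k)^p"
proof -
  have "(k powr (1 / real (p + 1)))^(p + 1) = k powr (real (p + 1) * (1 / real (p + 1)))"
    using assms by (intro powr_power) simp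
  also have "\<dots> = k" using assms by simp
  finally have k_pow: "(k powr (1 / real (p + 1)))^(p + 1) = k" .
  have "(ln k powr (real p / real (p + 1)))^(p + 1) = ln k powr (real (p + 1) * (real p / real (p + 1)))"
    using assms by (intro powr_power) simp
  also have "\<dots> = (ln k)^p" using assms by (simp add: powr_realpow)
  finally have ln_k_pow: "(ln k powr (real p / real (p + 1)))^(p + 1) = (ln k)^p" .
  show ?thesis unfolding power_mult_distrib k_pow ln_k_pow ..
qed

lemma ramsey_inverse_estimate:
  fixes C T c k t :: real and p :: nat
  assumes C: "C \<ge> 1" and T: "T \<ge> 3"
    and c: "c = 1 / (2 * C * (2 * real (p + 1))^p)"
    and k: "max T (1 / c) ^ (2 * (p + 1)) \<le> k"
    and t: "t = c * k powr (1 / real (p + 1)) * ln k powr (real p / real (p + 1))"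
  shows "T \<le> t" "C * t^(p + 1) / (ln t)^p \<le> k / 2"
proof -
  define \<rho> where "\<rho> = real (p + 1)"
  define Z where "Z = max T (1 / c)"
  have \<rho>: "\<rho> \<ge> 1" and C2: "(2 * \<rho>)^p \<ge> 1" by (auto simp: \<rho>_def intro: one_le_power)
  have c_pos: "c > 0" and c_le: "c \<le> 1"
    using C C2 mult_mono[OF _ C2, of 1 "2 * C"] unfolding c \<rho>_def by auto
  have "c * (1 / c) \<le> c * Z" using c_pos by (intro mult_left_mono) (auto simp: Z_def)
  hence Z: "3 \<le> Z" "1 \<le> c * Z" using T c_pos by (auto simp: Z_def)
  note root = root_threshold[OF _ Z(2) k[folded Z_def], folded \<rho>_def]
  have "Z \<le> Z^(2 * (p + 1))" using power_increasing[of 1 "2 * (p + 1)" Z] Z(1) by simp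
  hence k3: "k \<ge> 3" using k[folded Z_def] Z(1) by linarith
  hence ln_k: "ln k \<ge> 1" using exp_le ln_ge_iff[of k 1] by auto
  have "c * k powr (1 / \<rho>) * 1 \<le> t"
    unfolding t \<rho>_def[symmetric] using c_pos ln_k \<rho> by (intro mult_left_mono ge_one_powr_ge_zero) auto
  hence wt: "k powr (1 / (2 * \<rho>)) \<le> t" using root(2) Z(1) by simp
  thus "T \<le> t" using root(1) Z(1) by (simp add: Z_def)
  have t_pos: "t > 0" using wt k3 by (smt (verit) powr_gt_zero)
  have "ln k / (2 * \<rho>) = ln (k powr (1 / (2 * \<rho>)))" using k3 by (simp add: ln_powr)
  also have "\<dots> \<le> ln t" using wt t_pos k3 by (subst ln_le_cancel_iff) auto
  finally have "(ln k / (2 * \<rho>))^p \<le> (ln t)^p" using ln_k \<rho> by (intro power_mono) auto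
  hence ln_t: "(ln k)^p / (2 * \<rho>)^p \<le> (ln t)^p" by (simp add: power_divide)
  have "C * t^(p + 1) / (ln t)^p = C * (c^(p + 1) * k * (ln k)^p) / (ln t)^p"
    using power_of_threshold[of k c p] k3 ln_k by (simp add: t)
  also have "\<dots> \<le> C * (c^(p + 1) * k * (ln k)^p) / ((ln k)^p / (2 * \<rho>)^p)"
  proof (rule divide_left_mono[OF ln_t])
    show "0 \<le> C * (c^(p + 1) * k * (ln k)^p)" using C c_pos k3 ln_k by simp
    have "0 < (ln k)^p / (2 * \<rho>)^p" using ln_k C2 by simp
    moreover from this have "0 < (ln t)^p" using ln_t by linarith
    ultimately show "0 < (ln t)^p * ((ln k)^p / (2 * \<rho>)^p)" by (rule mult_pos_pos[rotated])
  qed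
  also have "\<dots> = C * c^(p + 1) * (2 * \<rho>)^p * k" using ln_k C2 by (simp add: field_simps)
  also have "\<dots> \<le> C * c * (2 * \<rho>)^p * k"
    using power_decreasing[of 1 "p + 1" c] c_pos c_le C C2 k3 by (intro mult_right_mono) auto
  also have "\<dots> = k / 2" using C C2 by (simp add: c \<rho>_def)
  finally show "C * t^(p + 1) / (ln t)^p \<le> k / 2" .
qed

theorem independent_set_lower_bound:
  assumes "r \<ge> 3"
  shows "\<exists>c>0. \<exists>K. \<forall>V E. simple_graph V E \<longrightarrow> \<not> has_clique V E r \<longrightarrow> K \<le> real (card V) \<longrightarrow>
    (\<exists>S. independent_set V E S \<and>
      c * real (card V) powr (1 / (real r - 1)) * ln (real (card V)) powr ((real r - 2) / (real r - 1))
        \<le> real (card S))"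
proof -
  obtain C T where C: "C \<ge> 1" "T \<ge> 3" and R: "ramsey_bound r C T"
    using ramsey_bound_exists[of r] assms by auto
  define p where "p = r - 2"
  have r: "r - 1 = p + 1" "r - 2 = p" "real r - 1 = real (p + 1)" "real r - 2 = real p"
    using assms by (auto simp: p_def)
  define c where "c = 1 / (2 * C * (2 * real (p + 1))^p)"
  have "c > 0" using C by (simp add: c_def)
  moreover have "\<exists>S. independent_set V E S \<and>
      c * real (card V) powr (1 / real (p + 1)) * ln (real (card V)) powr (real p / real (p + 1))
        \<le> real (card S)"
    if G: "simple_graph V E" and no_clique: "\<not> has_clique V E r"
      and K: "max T (1 / c) ^ (2 * (p + 1)) \<le> real (card V)" for V E
  proof (rule ccontr)
    define t where "t = c * real (card V) powr (1 / real (p + 1)) * ln (real (card V)) powr (real p / real (p + 1))"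
    note estimate = ramsey_inverse_estimate[OF C c_def K t_def]
    assume "\<not> ?thesis"
    hence "\<forall>S. independent_set V E S \<longrightarrow> real (card S) < t" by (auto simp: t_def not_le)
    hence "real (card V) \<le> C * t^(p + 1) / (ln t)^p"
      using R estimate(1) G no_clique unfolding ramsey_bound_def r by blast
    moreover have "1 \<le> max T (1 / c) ^ (2 * (p + 1))" using C(2) by (intro one_le_power) auto
    ultimately show False using estimate(2) K by linarith
  qed
  ultimately show ?thesis unfolding r by blast
qed

section \<open>Colouring\<close>

lemma chromatic_number_le: "colorable V E k \<Longrightarrow> chromatic_number V E \<le> k"
  unfolding chromatic_number_def by (rule Least_le)

lemma colorable_add_independent_set:
  assumes k: "colorable (W - S) E k" and S: "independent_set W (induced E W) S"
  shows "colorable W E (Suc k)"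
proof -
  obtain col where col: "\<forall>v\<in>W - S. col v < k" "\<forall>u\<in>W - S. \<forall>v\<in>W - S. E u v \<longrightarrow> col u \<noteq> col v"
    using k unfolding colorable_def by blast
  have no_edge: "\<And>u v. u \<in> S \<Longrightarrow> v \<in> S \<Longrightarrow> \<not> E u v"
    using S unfolding independent_set_def induced_def by blast
  show ?thesis unfolding colorable_def
  proof (intro exI[of _ "\<lambda>v. if v \<in> S then k else col v"] conjI ballI impI)
    fix v assume "v \<in> W"
    hence "v \<notin> S \<Longrightarrow> col v < k" using col(1) by blast
    thus "(if v \<in> S then k else col v) < Suc k" by (auto simp: less_Suc_eq)
  next
    fix u v assume uv: "u \<in> W" "v \<in> W" "E u v"
    have "u \<notin> S \<Longrightarrow> col u < k" "v \<notin> S \<Longrightarrow> col v < k" using col(1) uv by blast+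
    moreover have "u \<notin> S \<Longrightarrow> v \<notin> S \<Longrightarrow> col u \<noteq> col v" using col(2) uv by blast
    ultimately show "(if u \<in> S then k else col u) \<noteq> (if v \<in> S then k else col v)"
      using no_edge uv by (cases "u \<in> S"; cases "v \<in> S") auto
  qed
qed

lemma greedy_colouring_bound:
  fixes f :: "nat \<Rightarrow> real"
  assumes f_mono: "\<And>i j. 1 \<le> i \<Longrightarrow> i \<le> j \<Longrightarrow> f i \<le> f j" and f_pos: "\<And>j. 1 \<le> j \<Longrightarrow> f j > 0"
    and large_independent_set:
      "\<And>W. W \<subseteq> V \<Longrightarrow> W \<noteq> {} \<Longrightarrow> \<exists>S. independent_set W (induced E W) S \<and> f (card W) \<le> real (card S)"
    and V: "finite V"
  shows "W \<subseteq> V \<Longrightarrow> \<exists>k. colorable W E k \<and> real k \<le> (\<Sum>j=1..card W. 1 / f j)"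
proof (induction "card W" arbitrary: W rule: less_induct)
  case less
  show ?case
  proof (cases "W = {}")
    case True
    thus ?thesis by (intro exI[of _ 0]) (simp add: colorable_def)
  next
    case False
    have W: "finite W" "1 \<le> card W"
      using less.prems V finite_subset False by (auto simp: Suc_le_eq card_gt_0_iff)
    obtain S where S: "independent_set W (induced E W) S" and S_card: "f (card W) \<le> real (card S)"
      using large_independent_set[OF less.prems False] by blast
    have "S \<subseteq> W" using S by (simp add: independent_set_def)
    hence card_W: "card (W - S) + card S = card W"
      using W(1) card_Diff_subset[of S W] card_mono[of W S] finite_subset by fastforce
    have "card S > 0" using S_card f_pos[OF W(2)] by (cases "card S") auto
    then obtain k where k: "colorable (W - S) E k" and k_le: "real k \<le> (\<Sum>j=1..card (W - S). 1 / f j)"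
      using less.hyps[of "W - S"] card_W less.prems by auto
    have "1 \<le> (\<Sum>j = card (W - S) + 1..card (W - S) + card S. 1 / f j)"
    proof -
      have "1 \<le> real (card S) / f (card W)" using S_card f_pos[OF W(2)] by simp
      also have "\<dots> = (\<Sum>j = card (W - S) + 1..card (W - S) + card S. 1 / f (card W))" by simp
      also have "\<dots> \<le> (\<Sum>j = card (W - S) + 1..card (W - S) + card S. 1 / f j)"
        using f_mono f_pos card_W by (intro sum_mono frac_le) auto
      finally show ?thesis .
    qed
    moreover have "(\<Sum>j=1..card W. 1 / f j)
        = (\<Sum>j=1..card (W - S). 1 / f j) + (\<Sum>j = card (W - S) + 1..card (W - S) + card S. 1 / f j)"
      using sum.ub_add_nat[of 1 "card (W - S)" "\<lambda>j. 1 / f j" "card S"] card_W by simp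
    ultimately show ?thesis using colorable_add_independent_set[OF k S] k_le
      by (intro exI[of _ "Suc k"]) auto
  qed
qed

lemma sum_powr_neg_le:
  fixes g :: real assumes g: "0 \<le> g" "g < 1"
  shows "(\<Sum>j=1..n. real j powr (-g)) \<le> real n powr (1 - g) / (1 - g)"
proof (induction n)
  case (Suc n)
  have step: "real (Suc n) powr (-g) \<le> (real (Suc n) powr (1 - g) - real n powr (1 - g)) / (1 - g)"
  proof (cases "n = 0")
    case False
    hence n: "real n > 0" by simp
    have "\<exists>z. real n < z \<and> z < real (Suc n) \<and>
        real (Suc n) powr (1 - g) - real n powr (1 - g) = (real (Suc n) - real n) * ((1 - g) * z powr (1 - g - 1))"
    proof (rule MVT2)
      fix x assume "real n \<le> x" "x \<le> real (Suc n)"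
      hence "x > 0" using n by linarith
      thus "((\<lambda>x. x powr (1 - g)) has_real_derivative (1 - g) * x powr (1 - g - 1)) (at x)"
        by (rule has_real_derivative_powr)
    qed simp
    then obtain z where z: "real n < z" "z < real (Suc n)"
      "real (Suc n) powr (1 - g) - real n powr (1 - g) = (1 - g) * z powr (- g)" by auto
    have "(1 - g) * real (Suc n) powr (-g) \<le> (1 - g) * z powr (-g)"
      using z(1,2) n g by (intro mult_left_mono powr_mono2') auto
    thus ?thesis using z(3) g by (simp add: pos_le_divide_eq mult.commute)
  qed (use g in simp)
  have "(\<Sum>j=1..Suc n. real j powr (-g)) = (\<Sum>j=1..n. real j powr (-g)) + real (Suc n) powr (-g)"
    by simp
  also have "\<dots> \<le> real (Suc n) powr (1 - g) / (1 - g)"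
    using Suc.IH step by (simp add: diff_divide_distrib)
  finally show ?case .
qed simp

lemma sum_inverse_le:
  fixes f :: "nat \<Rightarrow> real" and B g :: real
  assumes f_ge_1: "\<And>j. 1 \<le> f j" and f_large: "\<And>j. 1 \<le> j \<Longrightarrow> J \<le> j \<Longrightarrow> B * real j powr g \<le> f j"
    and B: "B > 0" and g: "0 \<le> g" "g < 1"
  shows "(\<Sum>j=1..n. 1 / f j) \<le> real J + real n powr (1 - g) / (1 - g) / B"
proof -
  have "1 / f j \<le> (if j < J then 1 else 0) + real j powr (-g) / B" if j: "j \<in> {1..n}" for j
  proof -
    have pos: "0 < B * real j powr g" "0 \<le> real j powr (-g) / B" using B j by auto
    show ?thesis
    proof (cases "j < J")
      case True
      have "1 / f j \<le> 1" using f_ge_1[of j] by simp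
      thus ?thesis using True pos by simp
    next
      case False
      hence "B * real j powr g \<le> f j" using f_large j by auto
      hence "1 / f j \<le> 1 / (B * real j powr g)"
        using pos f_ge_1[of j] by (intro divide_left_mono) auto
      thus ?thesis using False j B by (simp add: powr_minus divide_inverse mult.commute)
    qed
  qed
  hence "(\<Sum>j=1..n. 1 / f j) \<le> (\<Sum>j=1..n. (if j < J then 1 else 0) + real j powr (-g) / B)"
    by (rule sum_mono)
  also have "\<dots> = (\<Sum>j=1..n. (if j < J then 1 else 0)) + (\<Sum>j=1..n. real j powr (-g)) / B"
    by (simp add: sum.distrib sum_divide_distrib)
  finally have "(\<Sum>j=1..n. 1 / f j)
      \<le> (\<Sum>j=1..n. (if j < J then 1 else 0)) + (\<Sum>j=1..n. real j powr (-g)) / B" .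
  moreover have "(\<Sum>j=1..n. (if j < J then 1 else 0 :: real)) \<le> real J"
  proof -
    have "(\<Sum>j=1..n. (if j < J then 1 else 0 :: real)) = real (card {j \<in> {1..n}. j < J})"
      by (simp add: sum.inter_filter[symmetric])
    also have "\<dots> \<le> real J" using card_mono[of "{..<J}" "{j \<in> {1..n}. j < J}"] by auto
    finally show ?thesis .
  qed
  moreover have "(\<Sum>j=1..n. real j powr (-g)) / B \<le> real n powr (1 - g) / (1 - g) / B"
    using sum_powr_neg_le[OF g] B by (intro divide_right_mono) auto
  ultimately show ?thesis by linarith
qed

lemma fourth_root_le_powr_div_ln:
  fixes n \<beta> :: real assumes n: "n \<ge> 16" and \<beta>: "1/2 \<le> \<beta>" "\<beta> \<le> 1"
  shows "1 \<le> (n / ln n) powr \<beta>" "sqrt (sqrt n) \<le> 2 * (n / ln n) powr \<beta>"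
proof -
  have sqrt_n: "sqrt n \<ge> 4" using real_sqrt_le_mono[OF n] by simp
  have q: "sqrt n / 2 \<le> n / ln n" using sqrt_le_two_div_ln[of n] n by simp
  hence q1: "1 \<le> n / ln n" using sqrt_n by linarith
  show "1 \<le> (n / ln n) powr \<beta>" using q1 \<beta> by (intro ge_one_powr_ge_zero) auto
  have "sqrt (sqrt n) / 2 \<le> sqrt (sqrt n) / sqrt 2"
    using real_le_lsqrt[of 2 2] n by (intro divide_left_mono) auto
  also have "\<dots> = sqrt (sqrt n / 2)" by (simp add: real_sqrt_divide)
  also have "\<dots> = (sqrt n / 2) powr (1/2)" using n by (intro powr_half_sqrt[symmetric]) auto
  also have "\<dots> \<le> (n / ln n) powr (1/2)" using q sqrt_n n by (intro powr_mono2) auto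
  also have "\<dots> \<le> (n / ln n) powr \<beta>" using q1 \<beta> by (intro powr_mono) auto
  finally show "sqrt (sqrt n) \<le> 2 * (n / ln n) powr \<beta>" by simp
qed

lemma powr_div_ln_quarter_le:
  fixes n \<beta> c :: real assumes n: "n \<ge> 16" and \<beta>: "1/2 \<le> \<beta>" "\<beta> \<le> 1" and c: "c > 0"
  shows "n powr \<beta> / \<beta> / (c * (ln n / 4) powr \<beta>) \<le> (8 / c) * (n / ln n) powr \<beta>"
proof -
  have L: "ln n > 0" using n by simp
  have "n powr \<beta> / \<beta> / (c * (ln n / 4) powr \<beta>) = (n / ln n) powr \<beta> * (4 powr \<beta> / (\<beta> * c))"
    using L \<beta> c n by (simp add: powr_divide field_simps)
  also have "\<dots> \<le> (n / ln n) powr \<beta> * (8 / c)"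
  proof (rule mult_left_mono)
    have "4 powr \<beta> \<le> 4 powr 1" using \<beta> by (intro powr_mono) auto
    hence "4 powr \<beta> / (\<beta> * c) \<le> 4 / (\<beta> * c)" using \<beta> c by (intro divide_right_mono) auto
    also have "\<dots> \<le> 4 / (1/2 * c)" using \<beta> c by (intro divide_left_mono) auto
    finally show "4 powr \<beta> / (\<beta> * c) \<le> 8 / c" by simp
  qed simp
  finally show ?thesis by (simp add: mult.commute)
qed

lemma sum_inverse_weight_le:
  fixes f :: "nat \<Rightarrow> real" and c \<gamma> :: real
  assumes c: "c > 0" and \<gamma>: "0 < \<gamma>" "\<gamma> \<le> 1/2" and n: "16 \<le> real n"
    and J: "real J \<le> sqrt (sqrt (real n)) + 1" and f_ge_1: "\<And>j. 1 \<le> f j"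
    and f_large: "\<And>j. J \<le> j \<Longrightarrow> c * (ln (real n) / 4) powr (1 - \<gamma>) * real j powr \<gamma> \<le> f j"
  shows "(\<Sum>j=1..n. 1 / f j) \<le> (4 + 8 / c) * (real n / ln (real n)) powr (1 - \<gamma>)"
proof -
  define \<mu> where "\<mu> = (ln (real n) / 4) powr (1 - \<gamma>)"
  have \<beta>: "1/2 \<le> 1 - \<gamma>" "1 - \<gamma> \<le> 1" using \<gamma> by auto
  have "c * \<mu> > 0" using c n by (simp add: \<mu>_def)
  with sum_inverse_le[of f J "c * \<mu>" \<gamma> n] f_ge_1 f_large \<gamma>
  have "(\<Sum>j=1..n. 1 / f j) \<le> real J + real n powr (1 - \<gamma>) / (1 - \<gamma>) / (c * \<mu>)"
    by (simp add: \<mu>_def)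
  also have "\<dots> \<le> 4 * (real n / ln (real n)) powr (1 - \<gamma>) + 8 / c * (real n / ln (real n)) powr (1 - \<gamma>)"
    using J fourth_root_le_powr_div_ln[OF n \<beta>] powr_div_ln_quarter_le[OF n \<beta> c]
    by (simp add: \<mu>_def)
  finally show ?thesis by (simp add: algebra_simps)
qed

lemma large_independent_set_weight:
  fixes c \<gamma> \<mu> K :: real and J :: nat
  assumes G: "simple_graph V E" and c: "c > 0"
    and indep: "\<And>W. W \<subseteq> V \<Longrightarrow> K \<le> real (card W) \<Longrightarrow> \<exists>S. independent_set W (induced E W) S \<and>
      c * real (card W) powr \<gamma> * ln (real (card W)) powr (1 - \<gamma>) \<le> real (card S)"
    and K: "K \<le> real J" and \<mu>: "\<And>j. J \<le> j \<Longrightarrow> \<mu> \<le> ln (real j) powr (1 - \<gamma>)"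
    and W: "W \<subseteq> V" "W \<noteq> {}"
  shows "\<exists>S. independent_set W (induced E W) S \<and>
    (if card W < J then 1 else max 1 (c * real (card W) powr \<gamma> * \<mu>)) \<le> real (card S)"
proof -
  obtain w where w: "w \<in> W" using W(2) by blast
  have single: "independent_set W (induced E W) {w}"
    using w simple_graph_irrefl[OF G] unfolding independent_set_def induced_def by auto
  show ?thesis
  proof (cases "card W < J \<or> c * real (card W) powr \<gamma> * \<mu> \<le> 1")
    case True
    thus ?thesis using single by (intro exI[of _ "{w}"]) auto
  next
    case False
    obtain S where S: "independent_set W (induced E W) S"
      and S_card: "c * real (card W) powr \<gamma> * ln (real (card W)) powr (1 - \<gamma>) \<le> real (card S)"
      using indep[OF W(1)] K False by force
    have "c * real (card W) powr \<gamma> * \<mu> \<le> c * real (card W) powr \<gamma> * ln (real (card W)) powr (1 - \<gamma>)"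
      using \<mu>[of "card W"] False c by (intro mult_left_mono) auto
    thus ?thesis using S S_card False by (intro exI[of _ S]) auto
  qed
qed

text \<open>Greedy colouring charges the vertex removed when j vertices remain 1 / f j colours. Once
  j \<ge> n^(1/4) we have ln j \<ge> ln n / 4, so the hypothesis allows f j = c j^\<gamma> (ln n / 4)^(1 - \<gamma>);
  below that threshold f j = 1, which costs only about n^(1/4) colours.\<close>
theorem chromatic_number_le_of_large_independent_sets:
  fixes c \<gamma> K :: real
  assumes c: "c > 0" and \<gamma>: "0 < \<gamma>" "\<gamma> \<le> 1/2" and G: "simple_graph V E"
    and indep: "\<And>W. W \<subseteq> V \<Longrightarrow> K \<le> real (card W) \<Longrightarrow> \<exists>S. independent_set W (induced E W) S \<and>
      c * real (card W) powr \<gamma> * ln (real (card W)) powr (1 - \<gamma>) \<le> real (card S)"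
    and n: "max 16 (max K 1 ^ 4) \<le> real (card V)"
  shows "real (chromatic_number V E) \<le> (4 + 8 / c) * (real (card V) / ln (real (card V))) powr (1 - \<gamma>)"
proof -
  define n where "n = real (card V)"
  define \<mu> where "\<mu> = (ln n / 4) powr (1 - \<gamma>)"
  define J where "J = nat \<lceil>sqrt (sqrt n)\<rceil>"
  define f where "f j = (if j < J then 1 else max 1 (c * real j powr \<gamma> * \<mu>))" for j
  have n16: "16 \<le> n" and "max K 1 ^ 4 \<le> n" using n by (auto simp: n_def)
  hence K: "max K 1 \<le> sqrt (sqrt n)" by (intro real_le_rsqrt) (auto simp: power_mult[symmetric])
  have \<mu>: "\<mu> > 0" using n16 by (simp add: \<mu>_def)
  have "0 < sqrt (sqrt n)" using n16 by simp
  hence J: "sqrt (sqrt n) \<le> real J" "real J \<le> sqrt (sqrt n) + 1" unfolding J_def by linarith+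
  have weight: "\<exists>S. independent_set W (induced E W) S \<and> f (card W) \<le> real (card S)"
    if "W \<subseteq> V" "W \<noteq> {}" for W
    unfolding f_def
  proof (rule large_independent_set_weight[OF G c indep _ _ that])
    show "K \<le> real J" using K J by linarith
    fix j assume "J \<le> j"
    hence j: "sqrt (sqrt n) \<le> real j" using J by linarith
    have "ln n / 4 = ln (sqrt (sqrt n))" using n16 by (simp add: ln_sqrt)
    moreover have "0 < real j" using j \<open>0 < sqrt (sqrt n)\<close> by linarith
    ultimately have "ln n / 4 \<le> ln (real j)" using j n16 by (simp add: ln_le_cancel_iff)
    thus "\<mu> \<le> ln (real j) powr (1 - \<gamma>)" using n16 \<gamma> by (simp add: \<mu>_def powr_mono2)
  qed
  have f_mono: "f i \<le> f j" if "1 \<le> i" "i \<le> j" for i j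
  proof -
    have "c * real i powr \<gamma> * \<mu> \<le> c * real j powr \<gamma> * \<mu>"
      using that c \<mu> \<gamma> by (intro mult_right_mono mult_left_mono powr_mono2) auto
    thus ?thesis using that by (auto simp: f_def)
  qed
  obtain k where k: "colorable V E k" and k_le: "real k \<le> (\<Sum>j=1..card V. 1 / f j)"
    using greedy_colouring_bound[OF f_mono _ weight simple_graph_finite[OF G], of V]
    by (force simp: f_def)
  moreover have "(\<Sum>j=1..card V. 1 / f j) \<le> (4 + 8 / c) * (n / ln n) powr (1 - \<gamma>)"
    using sum_inverse_weight_le[OF c \<gamma>, of "card V" J f] n16 J(2)
    by (auto simp: f_def n_def \<mu>_def mult_ac)
  ultimately show ?thesis using chromatic_number_le[OF k] by (simp add: n_def)
qed

theorem mainTheorem9: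
  fixes r :: nat
  assumes "r \<ge> 3"
  shows "\<exists>C::real. \<exists>N::nat. \<forall>V E. simple_graph V E \<longrightarrow> Kr_free V E r \<longrightarrow> card V \<ge> N \<longrightarrow>
           real (chromatic_number V E)
             \<le> C * (real (card V) / ln (real (card V))) powr ((real r - 2) / (real r - 1))"
proof -
  define \<gamma> where "\<gamma> = 1 / (real r - 1)"
  have \<gamma>: "0 < \<gamma>" "\<gamma> \<le> 1/2" and \<beta>: "(real r - 2) / (real r - 1) = 1 - \<gamma>"
    using assms by (auto simp: \<gamma>_def field_simps)
  obtain c K where c: "c > 0" and indep: "\<forall>V E. simple_graph V E \<longrightarrow> \<not> has_clique V E r \<longrightarrow>
      K \<le> real (card V) \<longrightarrow> (\<exists>S. independent_set V E S \<and>
        c * real (card V) powr \<gamma> * ln (real (card V)) powr (1 - \<gamma>) \<le> real (card S))"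
    using independent_set_lower_bound[OF assms] unfolding \<beta> \<gamma>_def by blast
  have "real (chromatic_number V E) \<le> (4 + 8 / c) * (real (card V) / ln (real (card V))) powr (1 - \<gamma>)"
    if G: "simple_graph V E" and free: "Kr_free V E r" and N: "nat \<lceil>max 16 (max K 1 ^ 4)\<rceil> \<le> card V"
    for V E
  proof (rule chromatic_number_le_of_large_independent_sets[OF c \<gamma> G])
    fix W assume "W \<subseteq> V" "K \<le> real (card W)"
    thus "\<exists>S. independent_set W (induced E W) S \<and>
        c * real (card W) powr \<gamma> * ln (real (card W)) powr (1 - \<gamma>) \<le> real (card S)"
      using indep simple_graph_induced[OF G] has_clique_induced free unfolding Kr_free_def by blast
  qed (use N in linarith)
  thus ?thesis unfolding \<beta> by blast
qed

end
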